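(* Let $d:\mathbb{Z}\to\mathbb{C}$ be bounded and $(Ju)(n)=u(n-1)+d(n)u(n)+u(n+1)$ on $\ell^2(\mathbb{Z})$. Suppose there are $b_1\ne b_2$ in $\mathbb{R}$ such that $(\Im(d(n)))_{n\in\mathbb{Z}}$ alternates between $b_1$ and $b_2$, i.e. $\Im(d(n))=b_1$ for all even $n$ and $\Im(d(n))=b_2$ for all odd $n$. Then $J$ has no boundary eigenvalues.
   Context: The numerical range is $\operatorname{Num}(J)=\{\langle Ju,u\rangle:\|u\|=1\}$, and a boundary eigenvalue of $J$ is an eigenvalue of $J$ lying in the topological boundary of $\operatorname{Num}(J)$. *)

theory Defs
  imports "HOL-Analysis.Analysis"
begin

definition l2Z :: "(int \<Rightarrow> complex) set" where
  "l2Z = {u. (\<lambda>n. (cmod (u n))\<^sup>2) summable_on UNIV}"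

definition l2_inner :: "(int \<Rightarrow> complex) \<Rightarrow> (int \<Rightarrow> complex) \<Rightarrow> complex" where
  "l2_inner u v = (\<Sum>\<^sub>\<infinity> n. u n * cnj (v n))"

definition l2_norm :: "(int \<Rightarrow> complex) \<Rightarrow> real" where
  "l2_norm u = sqrt (\<Sum>\<^sub>\<infinity> n. (cmod (u n))\<^sup>2)"

definition jacobi_op :: "(int \<Rightarrow> complex) \<Rightarrow> (int \<Rightarrow> complex) \<Rightarrow> (int \<Rightarrow> complex)" where
  "jacobi_op d u = (\<lambda>n. u (n - 1) + d n * u n + u (n + 1))"

definition num_range :: "(int \<Rightarrow> complex) \<Rightarrow> complex set" where
  "num_range d = {l2_inner (jacobi_op d u) u | u. u \<in> l2Z \<and> l2_norm u = 1}"

definition is_eigenvalue :: "(int \<Rightarrow> complex) \<Rightarrow> complex \<Rightarrow> bool" where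
  "is_eigenvalue d mu \<longleftrightarrow> (\<exists>u \<in> l2Z. u \<noteq> (\<lambda>_. 0) \<and> jacobi_op d u = (\<lambda>n. mu * u n))"

definition is_boundary_eigenvalue :: "(int \<Rightarrow> complex) \<Rightarrow> complex \<Rightarrow> bool" where
  "is_boundary_eigenvalue d mu \<longleftrightarrow> is_eigenvalue d mu \<and> mu \<in> frontier (num_range d)"

end

theory Submission
  imports Defs
begin

text \<open>
  Let \<open>mu\<close> be an eigenvalue of the Jacobi operator \<open>J\<close> with eigenvector \<open>u\<close>. We show that
  \<open>mu\<close> is an interior point of the numerical range, so it cannot be a boundary eigenvalue.

  The idea is to perturb \<open>u\<close> in a direction \<open>w\<close> orthogonal to \<open>u\<close>: for \<open>x = u + \<epsilon> w\<close>
  one has \<open>\<langle>Jx,x\<rangle> = mu \<parallel>u\<parallel>\<^sup>2 + \<epsilon> C + |\<epsilon>|\<^sup>2 \<langle>Jw,w\<rangle>\<close> and \<open>\<parallel>x\<parallel>\<^sup>2 = \<parallel>u\<parallel>\<^sup>2 + |\<epsilon>|\<^sup>2 \<parallel>w\<parallel>\<^sup>2\<close>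
  with \<open>C = \<langle>Jw,u\<rangle>\<close>. If \<open>C \<noteq> 0\<close>, an intermediate value argument in \<open>|\<epsilon>|\<close> shows that the
  Rayleigh quotients \<open>\<langle>Jx,x\<rangle>/\<parallel>x\<parallel>\<^sup>2\<close> fill a whole disc around \<open>mu\<close>.

  We take \<open>w = \<beta> u\<close> with \<open>\<beta>(n) = Im mu - Im d(n)\<close>. The anti-Hermitian part of \<open>J\<close> is
  multiplication by \<open>d - cnj d = 2i Im d\<close>; from this one gets \<open>\<langle>u,w\<rangle> = 0\<close> and
  \<open>C = -2i \<Sum> \<beta>(n)\<^sup>2 |u(n)|\<^sup>2\<close>. Finally \<open>C \<noteq> 0\<close>: otherwise \<open>u\<close> lives where \<open>Im d = Im mu\<close>,
  i.e. on one parity class, and then the eigenvalue equation forces \<open>u(n+2) = -u(n)\<close>,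
  which is incompatible with \<open>u \<in> \<ell>\<^sup>2\<close>.
\<close>

section \<open>The space \<open>\<ell>\<^sup>2(\<int>)\<close>\<close>

lemma summable_on_by_norm_bound:
  fixes f :: "'a \<Rightarrow> complex"
  assumes "g summable_on A" "\<And>x. x \<in> A \<Longrightarrow> norm (f x) \<le> g x"
  shows "f summable_on A"
proof -
  have "(\<lambda>x. norm (f x)) summable_on A"
    by (rule Infinite_Sum.abs_summable_on_comparison_test'[OF assms])
  then show ?thesis by (simp add: abs_summable_summable)
qed

lemma l2_add:
  assumes "x \<in> l2Z" "y \<in> l2Z"
  shows "(\<lambda>n. x n + y n) \<in> l2Z"
proof -
  have s: "(\<lambda>n. 2 * (cmod (x n))\<^sup>2 + 2 * (cmod (y n))\<^sup>2) summable_on UNIV"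
    using assms by (intro summable_on_add summable_on_cmult_right) (auto simp: l2Z_def)
  have "(cmod (x n + y n))\<^sup>2 \<le> 2 * (cmod (x n))\<^sup>2 + 2 * (cmod (y n))\<^sup>2" for n
  proof -
    have "(cmod (x n + y n))\<^sup>2 \<le> (cmod (x n) + cmod (y n))\<^sup>2"
      by (simp add: power_mono norm_triangle_ineq)
    also have "\<dots> \<le> 2 * (cmod (x n))\<^sup>2 + 2 * (cmod (y n))\<^sup>2"
      using zero_le_power2[of "cmod (x n) - cmod (y n)"] by (simp add: power2_eq_square algebra_simps)
    finally show ?thesis .
  qed
  then show ?thesis unfolding l2Z_def
    by (auto intro: summable_on_comparison_test[OF s])
qed

lemma l2_mult:
  assumes "x \<in> l2Z" "\<And>n. cmod (m n) \<le> B"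
  shows "(\<lambda>n. m n * x n) \<in> l2Z"
proof -
  have s: "(\<lambda>n. B\<^sup>2 * (cmod (x n))\<^sup>2) summable_on UNIV"
    using assms by (intro summable_on_cmult_right) (auto simp: l2Z_def)
  have "(cmod (m n * x n))\<^sup>2 \<le> B\<^sup>2 * (cmod (x n))\<^sup>2" for n
    by (simp add: norm_mult power_mult_distrib mult_right_mono power_mono assms(2))
  then show ?thesis unfolding l2Z_def
    by (auto intro: summable_on_comparison_test[OF s])
qed

lemma l2_scale:
  assumes "x \<in> l2Z"
  shows "(\<lambda>n. c * x n) \<in> l2Z"
  using l2_mult[OF assms, of "\<lambda>_. c" "cmod c"] by simp

lemma l2_shift:
  assumes "x \<in> l2Z"
  shows "(\<lambda>n. x (n + k)) \<in> l2Z"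
proof -
  have "(\<lambda>n. (cmod (x n))\<^sup>2) summable_on UNIV \<longleftrightarrow> (\<lambda>n. (cmod (x (n + k)))\<^sup>2) summable_on UNIV"
    by (rule summable_on_reindex_bij_witness[where j="\<lambda>n. n - k" and i="\<lambda>n. n + k"]) auto
  then show ?thesis using assms by (simp add: l2Z_def)
qed

lemma l2_shift_back:
  assumes "x \<in> l2Z"
  shows "(\<lambda>n. x (n - k)) \<in> l2Z"
  using l2_shift[OF assms, of "-k"] by simp

lemma l2_jacobi:
  assumes "x \<in> l2Z" "\<And>n. cmod (d n) \<le> B"
  shows "jacobi_op d x \<in> l2Z"
  unfolding jacobi_op_def
  by (intro l2_add l2_mult[OF _ assms(2)] l2_shift l2_shift_back assms(1))

lemma l2_inner_summable:
  assumes "x \<in> l2Z" "y \<in> l2Z"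
  shows "(\<lambda>n. x n * cnj (y n)) summable_on UNIV"
proof (rule summable_on_by_norm_bound)
  show "(\<lambda>n. (cmod (x n))\<^sup>2 + (cmod (y n))\<^sup>2) summable_on UNIV"
    using assms by (intro summable_on_add) (auto simp: l2Z_def)
  fix n
  have "2 * cmod (x n) * cmod (y n) \<le> (cmod (x n))\<^sup>2 + (cmod (y n))\<^sup>2"
    by (rule sum_squares_bound)
  moreover have "0 \<le> cmod (x n) * cmod (y n)" by simp
  ultimately show "cmod (x n * cnj (y n)) \<le> (cmod (x n))\<^sup>2 + (cmod (y n))\<^sup>2"
    unfolding norm_mult complex_mod_cnj by linarith
qed

lemma inner_add_left:
  assumes "x \<in> l2Z" "y \<in> l2Z" "z \<in> l2Z"
  shows "l2_inner (\<lambda>n. x n + y n) z = l2_inner x z + l2_inner y z"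
  unfolding l2_inner_def using l2_inner_summable[OF assms(1,3)] l2_inner_summable[OF assms(2,3)]
  by (simp add: distrib_right infsum_add)

lemma inner_scale_left:
  assumes "x \<in> l2Z" "z \<in> l2Z"
  shows "l2_inner (\<lambda>n. c * x n) z = c * l2_inner x z"
  unfolding l2_inner_def using l2_inner_summable[OF assms]
  by (simp add: mult.assoc infsum_cmult_right)

lemma inner_cnj: "l2_inner y x = cnj (l2_inner x y)"
  unfolding l2_inner_def by (simp flip: infsum_cnj add: mult.commute)

lemma inner_add_right:
  assumes "x \<in> l2Z" "y \<in> l2Z" "z \<in> l2Z"
  shows "l2_inner z (\<lambda>n. x n + y n) = l2_inner z x + l2_inner z y"
  by (metis inner_cnj inner_add_left[OF assms] complex_cnj_add)

lemma inner_scale_right: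
  assumes "x \<in> l2Z" "z \<in> l2Z"
  shows "l2_inner z (\<lambda>n. c * x n) = cnj c * l2_inner z x"
  by (metis inner_cnj inner_scale_left[OF assms] complex_cnj_mult)

lemma infsum_of_real: "(\<Sum>\<^sub>\<infinity> x\<in>A. complex_of_real (f x)) = of_real (\<Sum>\<^sub>\<infinity> x\<in>A. f x)"
proof (rule infsum_bounded_linear_strong[OF _ bounded_linear_of_real])
  show "(\<lambda>x. complex_of_real (f x)) summable_on A \<longleftrightarrow> f summable_on A"
    using summable_on_Re[of "\<lambda>x. complex_of_real (f x)"] summable_on_of_real[of f] by auto
qed

lemma inner_real_weight:
  "l2_inner (\<lambda>n. complex_of_real (r n) * u n) u = of_real (\<Sum>\<^sub>\<infinity> n. r n * (cmod (u n))\<^sup>2)"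
proof -
  have "l2_inner (\<lambda>n. complex_of_real (r n) * u n) u = (\<Sum>\<^sub>\<infinity> n. of_real (r n * (cmod (u n))\<^sup>2))"
    unfolding l2_inner_def
    by (rule infsum_cong) (simp add: mult.assoc flip: complex_norm_square)
  then show ?thesis by (simp only: infsum_of_real)
qed

lemma l2_norm_square: "(l2_norm x)\<^sup>2 = (\<Sum>\<^sub>\<infinity> n. (cmod (x n))\<^sup>2)"
  unfolding l2_norm_def by (simp add: infsum_nonneg)

lemma inner_self: "l2_inner x x = of_real ((l2_norm x)\<^sup>2)"
  using inner_real_weight[of "\<lambda>_. 1" x] by (simp add: l2_norm_square)

lemma infsum_pos_of_term:
  fixes f :: "'a \<Rightarrow> real"
  assumes "f summable_on UNIV" "\<And>n. f n \<ge> 0" "f k > 0"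
  shows "(\<Sum>\<^sub>\<infinity> n. f n) > 0"
proof -
  have "infsum f {k} \<le> infsum f UNIV"
    by (rule infsum_mono_neutral) (auto simp: assms)
  then show ?thesis using assms(3) by simp
qed

lemma l2_norm_pos:
  assumes "u \<in> l2Z" "u \<noteq> (\<lambda>_. 0)"
  shows "l2_norm u > 0"
proof -
  obtain k where "u k \<noteq> 0" using assms(2) by auto
  then have "(\<Sum>\<^sub>\<infinity> n. (cmod (u n))\<^sup>2) > 0"
    using assms(1) by (intro infsum_pos_of_term[of _ k]) (auto simp: l2Z_def)
  then show ?thesis unfolding l2_norm_def by simp
qed

section \<open>Adjoint and anti-Hermitian part of \<open>J\<close>\<close>

lemma jacobi_adjoint:
  assumes x: "x \<in> l2Z" and y: "y \<in> l2Z" and B: "\<And>n. cmod (d n) \<le> B"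
  shows "l2_inner (jacobi_op d x) y = l2_inner x (jacobi_op (\<lambda>n. cnj (d n)) y)"
proof -
  have s1: "(\<lambda>n. x (n - 1) * cnj (y n)) summable_on UNIV"
    by (rule l2_inner_summable[OF l2_shift_back[OF x] y])
  have s2: "(\<lambda>n. d n * x n * cnj (y n)) summable_on UNIV"
    by (rule l2_inner_summable[OF l2_mult[OF x B] y])
  have s3: "(\<lambda>n. x (n + 1) * cnj (y n)) summable_on UNIV"
    by (rule l2_inner_summable[OF l2_shift[OF x] y])
  have t1: "(\<lambda>n. x n * cnj (y (n - 1))) summable_on UNIV"
    by (rule l2_inner_summable[OF x l2_shift_back[OF y]])
  have t2: "(\<lambda>n. x n * cnj (cnj (d n) * y n)) summable_on UNIV"
    using s2 by (simp add: mult_ac)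
  have t3: "(\<lambda>n. x n * cnj (y (n + 1))) summable_on UNIV"
    by (rule l2_inner_summable[OF x l2_shift[OF y]])
  have r1: "(\<Sum>\<^sub>\<infinity> n. x (n - 1) * cnj (y n)) = (\<Sum>\<^sub>\<infinity> n. x n * cnj (y (n + 1)))"
    by (rule infsum_reindex_bij_witness[where j="\<lambda>n. n - 1" and i="\<lambda>n. n + 1"]) auto
  have r3: "(\<Sum>\<^sub>\<infinity> n. x (n + 1) * cnj (y n)) = (\<Sum>\<^sub>\<infinity> n. x n * cnj (y (n - 1)))"
    by (rule infsum_reindex_bij_witness[where j="\<lambda>n. n + 1" and i="\<lambda>n. n - 1"]) auto
  have m: "(\<lambda>n. d n * x n * cnj (y n)) = (\<lambda>n. x n * cnj (cnj (d n) * y n))"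
    by (auto simp: mult_ac)
  have "l2_inner (jacobi_op d x) y =
     (\<Sum>\<^sub>\<infinity> n. x (n - 1) * cnj (y n)) + (\<Sum>\<^sub>\<infinity> n. d n * x n * cnj (y n))
       + (\<Sum>\<^sub>\<infinity> n. x (n + 1) * cnj (y n))"
    unfolding l2_inner_def jacobi_op_def
    by (simp add: distrib_right infsum_add s1 s2 s3 summable_on_add)
  also have "\<dots> = (\<Sum>\<^sub>\<infinity> n. x n * cnj (y (n - 1))) + (\<Sum>\<^sub>\<infinity> n. x n * cnj (cnj (d n) * y n))
       + (\<Sum>\<^sub>\<infinity> n. x n * cnj (y (n + 1)))"
    by (simp only: r1 r3 m add.commute add.left_commute add.assoc)
  also have "\<dots> = l2_inner x (jacobi_op (\<lambda>n. cnj (d n)) y)"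
    unfolding l2_inner_def jacobi_op_def
    by (simp only: complex_cnj_add distrib_left infsum_add t1 t2 t3 summable_on_add)
  finally show ?thesis .
qed

text \<open>The anti-Hermitian part \<open>J - J\<^sup>*\<close> of the Jacobi operator is multiplication by
  \<open>d - cnj d\<close>, in the sense of sesquilinear forms.\<close>
lemma jacobi_antihermitian_part:
  assumes x: "x \<in> l2Z" and y: "y \<in> l2Z" and B: "\<And>n. cmod (d n) \<le> B"
  shows "l2_inner (jacobi_op d x) y - cnj (l2_inner (jacobi_op d y) x)
           = l2_inner (\<lambda>n. (d n - cnj (d n)) * x n) y"
proof -
  have Jy: "jacobi_op d y \<in> l2Z" by (rule l2_jacobi[OF y B])
  have "cmod (cnj (d n) - d n) \<le> 2 * B" for n
    using norm_triangle_ineq4[of "cnj (d n)" "d n"] B[of n] by simp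
  then have dy: "(\<lambda>n. (cnj (d n) - d n) * y n) \<in> l2Z" by (rule l2_mult[OF y])
  have "jacobi_op (\<lambda>n. cnj (d n)) y = (\<lambda>n. jacobi_op d y n + (cnj (d n) - d n) * y n)"
    unfolding jacobi_op_def by (auto simp: algebra_simps)
  then have "l2_inner (jacobi_op d x) y = l2_inner x (jacobi_op d y)
               + l2_inner x (\<lambda>n. (cnj (d n) - d n) * y n)"
    using jacobi_adjoint[OF x y B] inner_add_right[OF Jy dy x] by simp
  moreover have "l2_inner x (\<lambda>n. (cnj (d n) - d n) * y n) = l2_inner (\<lambda>n. (d n - cnj (d n)) * x n) y"
    unfolding l2_inner_def by (rule infsum_cong) (simp add: mult_ac)
  ultimately show ?thesis by (simp flip: inner_cnj)
qed

section \<open>Rayleigh quotients and an interior point criterion\<close>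

lemma rayleigh_quotient_in_num_range:
  assumes x: "x \<in> l2Z" and npos: "l2_norm x > 0" and B: "\<And>n. cmod (d n) \<le> B"
  shows "l2_inner (jacobi_op d x) x / of_real ((l2_norm x)\<^sup>2) \<in> num_range d"
proof -
  define c where "c = complex_of_real (1 / l2_norm x)"
  define y where "y = (\<lambda>n. c * x n)"
  have yl: "y \<in> l2Z" unfolding y_def by (rule l2_scale[OF x])
  have "(l2_norm y)\<^sup>2 = (\<Sum>\<^sub>\<infinity> n. (1 / l2_norm x)\<^sup>2 * (cmod (x n))\<^sup>2)"
    unfolding l2_norm_square y_def c_def
    by (rule infsum_cong) (simp add: norm_divide power_divide)
  also have "\<dots> = (1 / l2_norm x)\<^sup>2 * (l2_norm x)\<^sup>2"
    unfolding l2_norm_square using x by (simp add: infsum_cmult_right l2Z_def)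
  also have "\<dots> = 1" using npos by (simp add: power_divide)
  finally have "(l2_norm y)\<^sup>2 = 1" .
  moreover have "l2_norm y \<ge> 0" unfolding l2_norm_def by (simp add: infsum_nonneg)
  ultimately have unit: "l2_norm y = 1" using power2_eq_1_iff[of "l2_norm y"] by linarith
  have Jx: "jacobi_op d x \<in> l2Z" by (rule l2_jacobi[OF x B])
  have "jacobi_op d y = (\<lambda>n. c * jacobi_op d x n)"
    unfolding jacobi_op_def y_def by (auto simp: algebra_simps)
  then have "l2_inner (jacobi_op d y) y = c * (cnj c * l2_inner (jacobi_op d x) x)"
    using inner_scale_left[OF Jx yl, of c] inner_scale_right[OF x Jx, of c] by (simp add: y_def)
  also have "\<dots> = l2_inner (jacobi_op d x) x / of_real ((l2_norm x)\<^sup>2)"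
    by (simp add: c_def power2_eq_square field_simps)
  finally show ?thesis using yl unit unfolding num_range_def by force
qed

text \<open>The modulus
  \<open>\<rho> = |\<epsilon>|\<close> is found by the intermediate value theorem, then the phase of \<open>\<epsilon>\<close> is free.\<close>
lemma small_perturbation_equation_solvable:
  fixes C a z :: complex and S W :: real
  assumes C: "C \<noteq> 0" and S: "S > 0" and W: "W \<ge> 0"
  defines "\<rho>0 \<equiv> cmod C / (2 * (cmod a + 1))"
  assumes z: "cmod z * (S + \<rho>0\<^sup>2 * W) \<le> \<rho>0 * cmod C / 2"
  shows "\<exists>\<epsilon>. \<epsilon> * C + of_real ((cmod \<epsilon>)\<^sup>2) * a = z * of_real (S + (cmod \<epsilon>)\<^sup>2 * W)"
proof -
  define g where "g \<rho> = \<rho> * cmod C - cmod (z * of_real (S + \<rho>\<^sup>2 * W) - of_real (\<rho>\<^sup>2) * a)" for \<rho>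
  have a1: "cmod a + 1 > 0" by (simp add: add_nonneg_pos)
  have r0: "\<rho>0 > 0" using C a1 unfolding \<rho>0_def by (intro divide_pos_pos) auto
  have g0: "g 0 \<le> 0" unfolding g_def by simp
  have ra: "\<rho>0 * cmod a \<le> cmod C / 2"
  proof -
    have "\<rho>0 * (cmod a + 1) = cmod C / 2" unfolding \<rho>0_def using a1 by (simp add: field_simps)
    then show ?thesis using r0 by (simp add: distrib_left)
  qed
  have "cmod (z * of_real (S + \<rho>0\<^sup>2 * W) - of_real (\<rho>0\<^sup>2) * a)
        \<le> cmod (z * of_real (S + \<rho>0\<^sup>2 * W)) + cmod (of_real (\<rho>0\<^sup>2) * a)"
    by (rule norm_triangle_ineq4)
  also have "\<dots> = cmod z * (S + \<rho>0\<^sup>2 * W) + \<rho>0 * (\<rho>0 * cmod a)"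
  proof -
    have "S + \<rho>0\<^sup>2 * W \<ge> 0" using S W by simp
    then have "cmod (complex_of_real (S + \<rho>0\<^sup>2 * W)) = S + \<rho>0\<^sup>2 * W"
      by (simp only: norm_of_real abs_of_nonneg)
    moreover have "cmod (complex_of_real (\<rho>0\<^sup>2)) = \<rho>0 * \<rho>0"
      unfolding norm_of_real power2_eq_square by simp
    ultimately show ?thesis by (simp only: norm_mult mult.assoc)
  qed
  also have "\<dots> \<le> \<rho>0 * cmod C / 2 + \<rho>0 * (cmod C / 2)"
    using z ra r0 by (intro add_mono mult_left_mono) auto
  finally have g1: "0 \<le> g \<rho>0" unfolding g_def by simp
  have cont: "continuous_on {0..\<rho>0} g" unfolding g_def by (intro continuous_intros)
  obtain \<rho> where \<rho>: "0 \<le> \<rho>" "g \<rho> = 0"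
    using IVT'[of g 0 0 \<rho>0, OF g0 g1 _ cont] r0 by auto
  define N where "N = z * of_real (S + \<rho>\<^sup>2 * W) - of_real (\<rho>\<^sup>2) * a"
  define \<epsilon> where "\<epsilon> = N / C"
  have "cmod N = \<rho> * cmod C" using \<rho>(2) unfolding g_def N_def by simp
  then have "cmod \<epsilon> = \<rho>" unfolding \<epsilon>_def using C \<rho>(1) by (simp add: norm_divide)
  moreover have "\<epsilon> * C = N" unfolding \<epsilon>_def using C by simp
  ultimately show ?thesis by (intro exI[of _ \<epsilon>]) (simp add: N_def)
qed

lemma l2_norm_pythagoras:
  assumes u: "u \<in> l2Z" and w: "w \<in> l2Z" and orth: "l2_inner u w = 0"
  shows "(l2_norm (\<lambda>n. u n + \<epsilon> * w n))\<^sup>2 = (l2_norm u)\<^sup>2 + (cmod \<epsilon>)\<^sup>2 * (l2_norm w)\<^sup>2"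
proof -
  define x where "x = (\<lambda>n. u n + \<epsilon> * w n)"
  have ew: "(\<lambda>n. \<epsilon> * w n) \<in> l2Z" by (rule l2_scale[OF w])
  have xl: "x \<in> l2Z" unfolding x_def by (rule l2_add[OF u ew])
  have orth': "l2_inner w u = 0" using orth inner_cnj[of w u] by simp
  have "complex_of_real ((l2_norm x)\<^sup>2) = l2_inner x x" by (rule inner_self[symmetric])
  also have "\<dots> = l2_inner u x + \<epsilon> * l2_inner w x"
    using inner_add_left[OF u ew xl] inner_scale_left[OF w xl] unfolding x_def by simp
  also have "\<dots> = of_real ((l2_norm u)\<^sup>2) + (\<epsilon> * cnj \<epsilon>) * of_real ((l2_norm w)\<^sup>2)"
    unfolding x_def inner_add_right[OF u ew u] inner_scale_right[OF w u]
      inner_add_right[OF u ew w] inner_scale_right[OF w w]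
    by (simp add: inner_self orth orth')
  also have "\<dots> = complex_of_real ((l2_norm u)\<^sup>2 + (cmod \<epsilon>)\<^sup>2 * (l2_norm w)\<^sup>2)"
    by (simp flip: complex_norm_square)
  finally show ?thesis unfolding x_def by (simp only: of_real_eq_iff)
qed

text \<open>Expansion of the quadratic form of \<open>J\<close> along \<open>u + \<epsilon> w\<close>, for an eigenvector \<open>u\<close> and a
  direction \<open>w \<perp> u\<close>: the term linear in \<open>cnj \<epsilon>\<close> is \<open>\<langle>Ju,w\<rangle> = mu \<langle>u,w\<rangle> = 0\<close>.\<close>
lemma jacobi_form_perturbation:
  assumes u: "u \<in> l2Z" and w: "w \<in> l2Z" and B: "\<And>n. cmod (d n) \<le> B"
    and eig: "jacobi_op d u = (\<lambda>n. mu * u n)" and orth: "l2_inner u w = 0"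
  shows "l2_inner (jacobi_op d (\<lambda>n. u n + \<epsilon> * w n)) (\<lambda>n. u n + \<epsilon> * w n)
           = mu * of_real ((l2_norm u)\<^sup>2) + \<epsilon> * l2_inner (jacobi_op d w) u
             + of_real ((cmod \<epsilon>)\<^sup>2) * l2_inner (jacobi_op d w) w"
proof -
  define x where "x = (\<lambda>n. u n + \<epsilon> * w n)"
  have ew: "(\<lambda>n. \<epsilon> * w n) \<in> l2Z" by (rule l2_scale[OF w])
  have xl: "x \<in> l2Z" unfolding x_def by (rule l2_add[OF u ew])
  have Ju: "jacobi_op d u \<in> l2Z" by (rule l2_jacobi[OF u B])
  have Jw: "jacobi_op d w \<in> l2Z" by (rule l2_jacobi[OF w B])
  have Jux: "l2_inner (jacobi_op d u) x = mu * of_real ((l2_norm u)\<^sup>2)"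
  proof -
    have "l2_inner (jacobi_op d u) w = 0"
      unfolding eig using inner_scale_left[OF u w, of mu] orth by simp
    then show ?thesis
      unfolding x_def inner_add_right[OF u ew Ju] inner_scale_right[OF w Ju]
      unfolding eig inner_scale_left[OF u u] by (simp add: inner_self)
  qed
  have Jwx: "l2_inner (jacobi_op d w) x
               = l2_inner (jacobi_op d w) u + cnj \<epsilon> * l2_inner (jacobi_op d w) w"
    unfolding x_def by (simp add: inner_add_right[OF u ew Jw] inner_scale_right[OF w Jw])
  have "jacobi_op d x = (\<lambda>n. jacobi_op d u n + \<epsilon> * jacobi_op d w n)"
    unfolding jacobi_op_def x_def by (auto simp: algebra_simps)
  then have "l2_inner (jacobi_op d x) x = l2_inner (jacobi_op d u) x + \<epsilon> * l2_inner (jacobi_op d w) x"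
    by (simp add: inner_add_left[OF Ju l2_scale[OF Jw] xl] inner_scale_left[OF Jw xl])
  also have "\<dots> = mu * of_real ((l2_norm u)\<^sup>2) + \<epsilon> * l2_inner (jacobi_op d w) u
             + (\<epsilon> * cnj \<epsilon>) * l2_inner (jacobi_op d w) w"
    unfolding Jux Jwx by (simp add: algebra_simps)
  finally show ?thesis unfolding x_def by (simp flip: complex_norm_square)
qed

text \<open>The Rayleigh quotient at
  \<open>u + \<epsilon> w\<close> equals \<open>mu + (\<epsilon> C + |\<epsilon>|\<^sup>2 a)/(S + |\<epsilon>|\<^sup>2 W)\<close>, which reaches every point of a disc.\<close>
lemma eigenvalue_interior_num_range:
  assumes u: "u \<in> l2Z" "u \<noteq> (\<lambda>_. 0)" and B: "\<And>n. cmod (d n) \<le> B"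
    and eig: "jacobi_op d u = (\<lambda>n. mu * u n)"
    and w: "w \<in> l2Z" and orth: "l2_inner u w = 0"
    and C: "l2_inner (jacobi_op d w) u \<noteq> 0"
  shows "mu \<in> interior (num_range d)"
proof -
  define S where "S = (l2_norm u)\<^sup>2"
  define W where "W = (l2_norm w)\<^sup>2"
  define a where "a = l2_inner (jacobi_op d w) w - mu * of_real W"
  define \<rho>0 where "\<rho>0 = cmod (l2_inner (jacobi_op d w) u) / (2 * (cmod a + 1))"
  define \<delta> where "\<delta> = \<rho>0 * cmod (l2_inner (jacobi_op d w) u) / 2 / (S + \<rho>0\<^sup>2 * W)"
  have S: "S > 0" unfolding S_def using l2_norm_pos[OF u] by simp
  have W: "W \<ge> 0" unfolding W_def by simp
  have SW: "S + \<rho>0\<^sup>2 * W > 0" using S W by (simp add: add_pos_nonneg)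
  have "\<rho>0 > 0" unfolding \<rho>0_def using C by (intro divide_pos_pos) (auto simp: add_nonneg_pos)
  then have \<delta>: "\<delta> > 0" unfolding \<delta>_def using C SW by simp
  have "ball mu \<delta> \<subseteq> num_range d"
  proof
    fix y assume "y \<in> ball mu \<delta>"
    then have "cmod (y - mu) < \<delta>" by (simp add: dist_norm norm_minus_commute)
    then have "cmod (y - mu) * (S + \<rho>0\<^sup>2 * W) < \<rho>0 * cmod (l2_inner (jacobi_op d w) u) / 2"
      using SW unfolding \<delta>_def by (simp add: pos_less_divide_eq algebra_simps)
    then obtain \<epsilon> where eps: "\<epsilon> * l2_inner (jacobi_op d w) u + of_real ((cmod \<epsilon>)\<^sup>2) * a
                                 = (y - mu) * of_real (S + (cmod \<epsilon>)\<^sup>2 * W)"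
      using small_perturbation_equation_solvable[OF C S W] unfolding \<rho>0_def by (meson less_imp_le)
    define x where "x = (\<lambda>n. u n + \<epsilon> * w n)"
    have NS: "S + (cmod \<epsilon>)\<^sup>2 * W > 0" using S W by (simp add: add_pos_nonneg)
    have nx: "(l2_norm x)\<^sup>2 = S + (cmod \<epsilon>)\<^sup>2 * W"
      unfolding x_def S_def W_def by (rule l2_norm_pythagoras[OF u(1) w orth])
    have eq: "l2_inner (jacobi_op d x) x = y * of_real (S + (cmod \<epsilon>)\<^sup>2 * W)"
      unfolding x_def jacobi_form_perturbation[OF u(1) w B eig orth] S_def[symmetric]
      using eps unfolding a_def by (simp add: algebra_simps)
    have "complex_of_real (S + (cmod \<epsilon>)\<^sup>2 * W) \<noteq> 0" using NS by (simp only: of_real_eq_0_iff)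
    then have y: "l2_inner (jacobi_op d x) x / of_real ((l2_norm x)\<^sup>2) = y"
      unfolding nx eq by (rule nonzero_mult_div_cancel_right)
    have "x \<in> l2Z" unfolding x_def by (rule l2_add[OF u(1) l2_scale[OF w]])
    moreover have "l2_norm x > 0"
      using nx NS unfolding l2_norm_def by (simp add: infsum_nonneg)
    ultimately show "y \<in> num_range d"
      using rayleigh_quotient_in_num_range[where d=d, OF _ _ B] y by blast
  qed
  then show ?thesis using \<delta> by (auto simp: mem_interior)
qed

section \<open>The direction \<open>w = (Im mu - Im d) u\<close>\<close>

lemma l2_Im_weight:
  assumes u: "u \<in> l2Z" and B: "\<And>n. cmod (d n) \<le> B"
  shows "(\<lambda>n. complex_of_real (a + s * Im (d n)) * u n) \<in> l2Z"
proof (rule l2_mult[OF u])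
  fix n
  have "\<bar>Im (d n)\<bar> \<le> B" using abs_Im_le_cmod[of "d n"] B[of n] by linarith
  then have "\<bar>s * Im (d n)\<bar> \<le> \<bar>s\<bar> * B" by (simp add: abs_mult mult_left_mono)
  then show "cmod (complex_of_real (a + s * Im (d n))) \<le> \<bar>a\<bar> + \<bar>s\<bar> * B"
    unfolding norm_of_real by linarith
qed

text \<open>Imaginary part of the Rayleigh quotient at an eigenvector: since the anti-Hermitian
  part of \<open>J\<close> is multiplication by \<open>d - cnj d = 2i Im d\<close>, one gets
  \<open>\<langle>(Im d) u, u\<rangle> = Im mu \<langle>u,u\<rangle>\<close>, i.e. the weight \<open>Im mu - Im d\<close> has mean zero.\<close>
lemma eigenvector_Im_weight_orthogonal:
  assumes u: "u \<in> l2Z" and B: "\<And>n. cmod (d n) \<le> B"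
    and eig: "jacobi_op d u = (\<lambda>n. mu * u n)"
  shows "l2_inner (\<lambda>n. complex_of_real (Im mu - Im (d n)) * u n) u = 0"
proof -
  have Imd_u: "(\<lambda>n. of_real (Im (d n)) * u n) \<in> l2Z"
    using l2_Im_weight[OF u B, of 0 1] by simp
  have "(mu - cnj mu) * l2_inner u u = l2_inner (\<lambda>n. (d n - cnj (d n)) * u n) u"
    using jacobi_antihermitian_part[where d=d, OF u u B] unfolding eig inner_scale_left[OF u u]
    by (simp add: inner_self algebra_simps)
  also have "(\<lambda>n. (d n - cnj (d n)) * u n) = (\<lambda>n. (2 * \<i>) * (of_real (Im (d n)) * u n))"
    by (simp add: complex_diff_cnj mult_ac)
  finally have "(2 * \<i>) * l2_inner (\<lambda>n. of_real (Im (d n)) * u n) u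
             = (2 * \<i>) * (of_real (Im mu) * l2_inner u u)"
    unfolding inner_scale_left[OF Imd_u u] by (simp add: complex_diff_cnj mult_ac)
  then have Imd_u_u: "l2_inner (\<lambda>n. of_real (Im (d n)) * u n) u = of_real (Im mu) * l2_inner u u"
    by simp
  have split: "(\<lambda>n. complex_of_real (Im mu - Im (d n)) * u n)
          = (\<lambda>n. of_real (Im mu) * u n + (-1) * (of_real (Im (d n)) * u n))"
    by (simp add: algebra_simps)
  have "l2_inner (\<lambda>n. of_real (Im mu) * u n + (-1) * (of_real (Im (d n)) * u n)) u
      = of_real (Im mu) * l2_inner u u + (-1) * l2_inner (\<lambda>n. of_real (Im (d n)) * u n) u"
    unfolding inner_add_left[OF l2_scale[OF u] l2_scale[OF Imd_u] u]
      inner_scale_left[OF u u] inner_scale_left[OF Imd_u u] ..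
  then show ?thesis unfolding split using Imd_u_u by simp
qed

text \<open>The cross term for the direction \<open>w = \<beta> u\<close>, \<open>\<beta> = Im mu - Im d\<close>: again by the
  anti-Hermitian part, \<open>\<langle>Jw,u\<rangle> = 2i \<langle>(Im d) w,u\<rangle> = -2i \<langle>\<beta>\<^sup>2 u,u\<rangle>\<close>.\<close>
lemma eigenvector_Im_weight_cross_term:
  assumes u: "u \<in> l2Z" and B: "\<And>n. cmod (d n) \<le> B"
    and eig: "jacobi_op d u = (\<lambda>n. mu * u n)"
  defines "\<beta> \<equiv> \<lambda>n. Im mu - Im (d n)"
  shows "l2_inner (jacobi_op d (\<lambda>n. of_real (\<beta> n) * u n)) u
           = - 2 * \<i> * of_real (\<Sum>\<^sub>\<infinity> n. (\<beta> n)\<^sup>2 * (cmod (u n))\<^sup>2)"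
proof -
  define w where "w = (\<lambda>n. of_real (\<beta> n) * u n)"
  have w: "w \<in> l2Z" using l2_Im_weight[OF u B, of "Im mu" "-1"] unfolding w_def \<beta>_def by simp
  have w_u: "l2_inner w u = 0"
    unfolding w_def \<beta>_def by (rule eigenvector_Im_weight_orthogonal[OF u B eig])
  have Imd_w: "(\<lambda>n. of_real (Im (d n)) * w n) \<in> l2Z"
    using l2_Im_weight[OF w B, of 0 1] by simp
  have b2: "(\<lambda>n. of_real ((\<beta> n)\<^sup>2) * u n) \<in> l2Z"
    using l2_Im_weight[OF w B, of "Im mu" "-1"] unfolding w_def \<beta>_def
    by (simp add: power2_eq_square mult.assoc)
  have "l2_inner (jacobi_op d u) w = 0"
    unfolding eig inner_scale_left[OF u w] using w_u inner_cnj[of u w] by simp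
  then have "l2_inner (jacobi_op d w) u = l2_inner (\<lambda>n. (d n - cnj (d n)) * w n) u"
    using jacobi_antihermitian_part[where d=d, OF w u B] by simp
  also have "(\<lambda>n. (d n - cnj (d n)) * w n) = (\<lambda>n. (2 * \<i>) * (of_real (Im (d n)) * w n))"
    by (simp add: complex_diff_cnj mult_ac)
  also have "l2_inner \<dots> u = 2 * \<i> * l2_inner (\<lambda>n. of_real (Im (d n)) * w n) u"
    by (rule inner_scale_left[OF Imd_w u])
  also have "(\<lambda>n. of_real (Im (d n)) * w n)
      = (\<lambda>n. of_real (Im mu) * w n + (-1) * (of_real ((\<beta> n)\<^sup>2) * u n))"
    unfolding w_def \<beta>_def by (simp add: algebra_simps power2_eq_square)
  also have "l2_inner \<dots> u = of_real (Im mu) * l2_inner w u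
                             + (-1) * l2_inner (\<lambda>n. of_real ((\<beta> n)\<^sup>2) * u n) u"
    unfolding inner_add_left[OF l2_scale[OF w] l2_scale[OF b2] u]
      inner_scale_left[OF w u] inner_scale_left[OF b2 u] ..
  finally show ?thesis
    using w_u inner_real_weight[of "\<lambda>n. (\<beta> n)\<^sup>2" u] unfolding w_def by simp
qed

section \<open>Eigenvectors cannot live on one parity class\<close>

lemma l2_tendsto_zero_along:
  fixes g :: "nat \<Rightarrow> int"
  assumes "u \<in> l2Z" "inj g"
  shows "(\<lambda>j. (cmod (u (g j)))\<^sup>2) \<longlonglongrightarrow> 0"
proof -
  have "(\<lambda>n. (cmod (u n))\<^sup>2) summable_on range g"
    using assms(1) unfolding l2Z_def by (auto intro: summable_on_subset)
  then have "(\<lambda>j. (cmod (u (g j)))\<^sup>2) summable_on UNIV"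
    using assms(2) by (simp add: summable_on_reindex o_def)
  then have "summable (\<lambda>j. (cmod (u (g j)))\<^sup>2)"
    by (simp add: summable_on_UNIV_nonneg_real_iff)
  then show ?thesis by (rule summable_LIMSEQ_zero)
qed

text \<open>If an eigenvector vanishes on all sites of the parity opposite to \<open>n0\<close>, the
  eigenvalue equation at those sites gives \<open>u(k+2) = -u(k)\<close> along \<open>n0 + 2\<nat>\<close>; then
  \<open>|u(n0 + 2j)|\<close> is constant, and square summability forces \<open>u(n0) = 0\<close>.\<close>
lemma eigenvector_on_parity_class:
  assumes u: "u \<in> l2Z" and eig: "jacobi_op d u = (\<lambda>n. mu * u n)"
    and vanish: "\<And>k. even k \<noteq> even n0 \<Longrightarrow> u k = 0"
  shows "u n0 = 0"
proof -
  have step: "u (k + 2) = - u k" if "even k = even n0" for k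
  proof -
    have "even (k + 1) \<noteq> even n0" using that by simp
    then have "u (k + 1) = 0" by (rule vanish)
    moreover have "jacobi_op d u (k + 1) = mu * u (k + 1)" using eig by simp
    ultimately have "u k + u (k + 2) = 0" unfolding jacobi_op_def by (simp add: add.assoc)
    then show ?thesis by (simp add: eq_neg_iff_add_eq_0 add.commute)
  qed
  have const: "cmod (u (n0 + 2 * int j)) = cmod (u n0)" for j
  proof (induction j)
    case (Suc j)
    have "n0 + 2 * int (Suc j) = (n0 + 2 * int j) + 2" by simp
    moreover have "u ((n0 + 2 * int j) + 2) = - u (n0 + 2 * int j)" by (rule step) simp
    ultimately have "u (n0 + 2 * int (Suc j)) = - u (n0 + 2 * int j)" by (simp only:)
    then show ?case using Suc by simp
  qed simp
  have "inj (\<lambda>j::nat. n0 + 2 * int j)" by (auto simp: inj_def)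
  then have "(\<lambda>j. (cmod (u (n0 + 2 * int j)))\<^sup>2) \<longlonglongrightarrow> 0"
    by (rule l2_tendsto_zero_along[OF u])
  then have "(\<lambda>j::nat. (cmod (u n0))\<^sup>2) \<longlonglongrightarrow> 0" by (simp only: const)
  then have "(cmod (u n0))\<^sup>2 = 0" by (simp add: LIMSEQ_const_iff)
  then show ?thesis by simp
qed

text \<open>Under the alternation hypothesis, the level set \<open>{n. Im d(n) = Im mu}\<close> lies in one
  parity class, so a nonzero eigenvector cannot be supported in it.\<close>
lemma alternating_eigenvector_off_level_set:
  fixes d :: "int \<Rightarrow> complex" and b1 b2 :: real
  assumes u: "u \<in> l2Z" "u \<noteq> (\<lambda>_. 0)" and eig: "jacobi_op d u = (\<lambda>n. mu * u n)"
    and b: "b1 \<noteq> b2" "\<And>n. even n \<Longrightarrow> Im (d n) = b1" "\<And>n. odd n \<Longrightarrow> Im (d n) = b2"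
  shows "\<exists>n. u n \<noteq> 0 \<and> Im (d n) \<noteq> Im mu"
proof (rule ccontr)
  assume "\<nexists>n. u n \<noteq> 0 \<and> Im (d n) \<noteq> Im mu"
  then have level: "Im (d n) = Im mu" if "u n \<noteq> 0" for n using that by blast
  obtain n0 where n0: "u n0 \<noteq> 0" using u(2) by auto
  have Im_d: "Im (d n) = (if even n then b1 else b2)" for n
    using b(2,3) by simp
  have "u k = 0" if "even k \<noteq> even n0" for k
  proof (rule ccontr)
    assume "u k \<noteq> 0"
    then have "Im (d k) = Im (d n0)" using level n0 by simp
    then show False using that b(1) unfolding Im_d by (simp split: if_splits)
  qed
  then have "u n0 = 0" by (rule eigenvector_on_parity_class[OF u(1) eig])
  then show False using n0 by simp
qed

theorem mainTheorem10:
  fixes d :: "int \<Rightarrow> complex" and b1 b2 :: real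
  assumes "bounded (range d)"
    and "b1 \<noteq> b2"
    and "\<And>n. even n \<Longrightarrow> Im (d n) = b1"
    and "\<And>n. odd n \<Longrightarrow> Im (d n) = b2"
  shows "\<not> (\<exists>mu. is_boundary_eigenvalue d mu)"
proof
  assume "\<exists>mu. is_boundary_eigenvalue d mu"
  then obtain mu u where fr: "mu \<in> frontier (num_range d)"
    and u: "u \<in> l2Z" "u \<noteq> (\<lambda>_. 0)" and eig: "jacobi_op d u = (\<lambda>n. mu * u n)"
    unfolding is_boundary_eigenvalue_def is_eigenvalue_def by blast
  obtain B where B: "\<And>n. cmod (d n) \<le> B"
    using assms(1) unfolding bounded_iff by blast
  define \<beta> where "\<beta> n = Im mu - Im (d n)" for n
  define w where "w = (\<lambda>n. complex_of_real (\<beta> n) * u n)"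
  have w: "w \<in> l2Z" using l2_Im_weight[OF u(1) B, of "Im mu" "-1"] unfolding w_def \<beta>_def by simp
  have "l2_inner w u = 0"
    unfolding w_def \<beta>_def by (rule eigenvector_Im_weight_orthogonal[OF u(1) B eig])
  then have orth: "l2_inner u w = 0" using inner_cnj[of u w] by simp
  have C: "l2_inner (jacobi_op d w) u = - 2 * \<i> * of_real (\<Sum>\<^sub>\<infinity> n. (\<beta> n)\<^sup>2 * (cmod (u n))\<^sup>2)"
    unfolding w_def \<beta>_def by (rule eigenvector_Im_weight_cross_term[OF u(1) B eig])
  obtain k where "u k \<noteq> 0" "\<beta> k \<noteq> 0"
    using alternating_eigenvector_off_level_set[OF u eig assms(2-4)] unfolding \<beta>_def by auto
  moreover have "(\<lambda>n. (\<beta> n)\<^sup>2 * (cmod (u n))\<^sup>2) summable_on UNIV"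
    using w unfolding l2Z_def w_def by (simp add: norm_mult power_mult_distrib)
  ultimately have "(\<Sum>\<^sub>\<infinity> n. (\<beta> n)\<^sup>2 * (cmod (u n))\<^sup>2) > 0"
    by (intro infsum_pos_of_term[of _ k]) auto
  then have "l2_inner (jacobi_op d w) u \<noteq> 0" unfolding C by simp
  then have "mu \<in> interior (num_range d)"
    by (rule eigenvalue_interior_num_range[where d=d, OF u B eig w orth])
  then show False using fr by (simp add: frontier_def)
qed

end
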